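(* For all integers $m\ge0$ and $k\ge0$, \[ \sum_{i=0}^{2k}(-1)^i\binom{m+k+i}{m+k-i}\binom{m+3k-i}{m-k+i}=(-1)^k\sum_{i=0}^{m}\binom{2k}{m-i}\binom{4k+i}{i}. \]
   Context: Binomial coefficients $\binom{a}{b}$ with integer $a\ge0$ are taken to be $0$ when $b<0$ or $b>a$. *)

theory Defs
  imports Main
begin

definition ibinom :: "int \<Rightarrow> int \<Rightarrow> int" where
  "ibinom a b = (if 0 \<le> b \<and> b \<le> a then int (nat a choose nat b) else 0)"

end

(* Put a = m + k. The left-hand side is the coefficient of x^(2k) in b_a(-x) b_a(x), where
   b_a(x) = sum_i C(a+i, 2i) x^i are the Morgan-Voyce polynomials, and the right-hand side is the
   coefficient of x^a in (-x)^k (1+x)^(2k) / (1-x)^(4k+1). For fixed a, collect both sides over k into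
   power series S_a(y) and T_a(y).

   Since b_(a+2) = (2+x) b_(a+1) - b_a, the product b_a(-x) b_a(x) satisfies the fourth-order recurrence
   whose characteristic roots are the pairwise products of the roots of the two factors, and taking even
   parts gives S_(a+4) = (4-y) S_(a+3) - (6+2y) S_(a+2) + (4-y) S_(a+1) - S_a. The columns
   C_k = (-x)^k (1+x)^(2k) / (1-x)^(4k+1) satisfy (1-x)^4 C_(k+1) = -x (1+x)^2 C_k, which, read off at
   x^(a+4), is the same recurrence for T_a. Both series agree for a < 4, hence for all a. *)

theory Submission
  imports Defs "HOL-Computational_Algebra.Formal_Power_Series"
begin

unbundle fps_syntax

lemma product_of_second_order_recurrences:
  fixes u v :: "nat \<Rightarrow> 'a::comm_ring_1"
  assumes u: "\<And>n. u (n + 2) = p * u (n + 1) - u n"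
    and v: "\<And>n. v (n + 2) = q * v (n + 1) - v n"
  shows "u (n + 4) * v (n + 4) = p * q * (u (n + 3) * v (n + 3))
           - (p\<^sup>2 + q\<^sup>2 - 2) * (u (n + 2) * v (n + 2)) + p * q * (u (n + 1) * v (n + 1)) - u n * v n"
proof -
  have u4: "u (n + 4) = p * u (n + 3) - u (n + 2)" using u[of "n + 2"] by (simp add: eval_nat_numeral)
  have u3: "u (n + 3) = p * u (n + 2) - u (n + 1)" using u[of "n + 1"] by (simp add: eval_nat_numeral)
  have v4: "v (n + 4) = q * v (n + 3) - v (n + 2)" using v[of "n + 2"] by (simp add: eval_nat_numeral)
  have v3: "v (n + 3) = q * v (n + 2) - v (n + 1)" using v[of "n + 1"] by (simp add: eval_nat_numeral)
  show ?thesis unfolding u4 u3 v4 v3 u v by (simp add: algebra_simps power2_eq_square)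
qed

lemma fourth_order_recurrence_unique:
  assumes u: "\<And>n. u (n + 4) = F (u (n + 3)) (u (n + 2)) (u (n + 1)) (u n)"
    and v: "\<And>n. v (n + 4) = F (v (n + 3)) (v (n + 2)) (v (n + 1)) (v n)"
    and init: "\<And>n. n < 4 \<Longrightarrow> u n = v n"
  shows "u (n::nat) = v n"
proof (induction n rule: less_induct)
  case (less n)
  show ?case
  proof (cases "n < 4")
    case False
    then obtain j where "n = j + 4" by (metis add.commute le_Suc_ex not_less)
    then show ?thesis using less u[of j] v[of j] by simp
  qed (rule init)
qed

definition fps_even_part :: "'a::comm_ring_1 fps \<Rightarrow> 'a fps" where
  "fps_even_part f = Abs_fps (\<lambda>k. f $ (2 * k))"

lemma fps_even_part_add: "fps_even_part (f + g) = fps_even_part f + fps_even_part g"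
  by (simp add: fps_even_part_def fps_eq_iff)

lemma fps_even_part_diff: "fps_even_part (f - g) = fps_even_part f - fps_even_part g"
  by (simp add: fps_even_part_def fps_eq_iff)

lemma fps_even_part_mult_X2_poly:
  "fps_even_part ((fps_const c + fps_const d * fps_X\<^sup>2) * f)
     = (fps_const c + fps_const d * fps_X) * fps_even_part f"
  by (simp add: fps_even_part_def fps_eq_iff distrib_right mult.assoc fps_X_power_mult_nth diff_mult_distrib2)

(* The expansion of 1 / (1 - X) ^ (n + 1). *)
definition fps_neg_binomial :: "nat \<Rightarrow> 'a::comm_ring_1 fps" where
  "fps_neg_binomial n = Abs_fps (\<lambda>i. of_nat ((n + i) choose i))"

lemma one_minus_X_mult_fps_neg_binomial: "(1 - fps_X) * fps_neg_binomial (Suc n) = fps_neg_binomial n"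
proof (rule fps_ext)
  fix i
  show "((1 - fps_X) * fps_neg_binomial (Suc n)) $ i = fps_neg_binomial n $ i"
    by (cases i) (simp_all add: fps_neg_binomial_def left_diff_distrib)
qed

lemma one_minus_X_power_mult_fps_neg_binomial:
  "(1 - fps_X) ^ j * fps_neg_binomial (n + j) = (fps_neg_binomial n :: 'a::comm_ring_1 fps)"
proof (induction j)
  case (Suc j)
  have "(1 - fps_X) ^ Suc j * fps_neg_binomial (n + Suc j)
      = (1 - fps_X) ^ j * ((1 - fps_X) * fps_neg_binomial (Suc (n + j)) :: 'a fps)"
    by (simp add: mult_ac)
  also have "\<dots> = fps_neg_binomial n"
    by (simp only: one_minus_X_mult_fps_neg_binomial Suc.IH)
  finally show ?case .
qed simp

lemma one_plus_X_power_nth: "((1 + fps_X) ^ n) $ i = (of_nat (n choose i) :: 'a::comm_ring_1)"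
proof (induction n arbitrary: i)
  case 0
  then show ?case by (cases i) simp_all
next
  case (Suc n)
  then show ?case by (cases i) (simp_all add: distrib_right)
qed

lemma one_minus_X_mult_nth_Suc: "((1 - fps_X) * f) $ Suc n = f $ Suc n - (f $ n :: 'a::comm_ring_1)"
  by (simp add: left_diff_distrib)

lemma one_plus_X_mult_nth_Suc: "((1 + fps_X) * f) $ Suc n = f $ Suc n + (f $ n :: 'a::comm_ring_1)"
  by (simp add: distrib_right)

lemma one_minus_X_power4_mult_nth:
  "((1 - fps_X) ^ 4 * f) $ (n + 4)
     = f $ (n + 4) - 4 * f $ (n + 3) + 6 * f $ (n + 2) - 4 * f $ (n + 1) + (f $ n :: 'a::comm_ring_1)"
  by (simp add: power4_eq_xxxx mult.assoc one_minus_X_mult_nth_Suc eval_nat_numeral)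

lemma X_one_plus_X_power2_mult_nth:
  "(fps_X * (1 + fps_X) ^ 2 * f) $ (n + 4) = f $ (n + 3) + 2 * f $ (n + 2) + (f $ (n + 1) :: 'a::comm_ring_1)"
  by (simp add: power2_eq_square mult.assoc one_plus_X_mult_nth_Suc eval_nat_numeral)

lemma choose_second_difference:
  "(n + 2 choose Suc (Suc k)) + (n choose Suc (Suc k)) = 2 * (Suc n choose Suc (Suc k)) + (n choose k)"
  by (simp add: numeral_2_eq_2)

definition morgan_voyce :: "'a::comm_ring_1 \<Rightarrow> nat \<Rightarrow> 'a fps" where
  "morgan_voyce s n = Abs_fps (\<lambda>i. s ^ i * of_nat ((n + i) choose (2 * i)))"

lemma morgan_voyce_rec:
  "morgan_voyce s (n + 2) = (2 + fps_const s * fps_X) * morgan_voyce s (n + 1) - morgan_voyce s n"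
proof (rule fps_ext)
  fix i
  show "morgan_voyce s (n + 2) $ i = ((2 + fps_const s * fps_X) * morgan_voyce s (n + 1) - morgan_voyce s n) $ i"
  proof (cases i)
    case (Suc j)
    have "(n + 2 + Suc j choose (2 * Suc j)) + (n + Suc j choose (2 * Suc j))
        = 2 * (n + 1 + Suc j choose (2 * Suc j)) + (n + 1 + j choose (2 * j))"
      using choose_second_difference[of "n + Suc j" "2 * j"] by (simp add: ac_simps)
    then have "of_nat (n + 2 + Suc j choose (2 * Suc j)) + of_nat (n + Suc j choose (2 * Suc j))
        = (2 * of_nat (n + 1 + Suc j choose (2 * Suc j)) + of_nat (n + 1 + j choose (2 * j)) :: 'a)"
      by (metis (mono_tags) of_nat_add of_nat_mult of_nat_numeral)
    then show ?thesis using Suc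
      by (simp add: morgan_voyce_def distrib_right numeral_fps_const algebra_simps)
  qed (simp add: morgan_voyce_def distrib_right numeral_fps_const)
qed

(* Its coefficient of X^k is the left-hand side of the theorem for a = m + k. *)
definition morgan_voyce_product_series :: "nat \<Rightarrow> int fps" where
  "morgan_voyce_product_series a = fps_even_part (morgan_voyce (-1) a * morgan_voyce 1 a)"

lemma morgan_voyce_product_series_nth:
  "morgan_voyce_product_series a $ k
     = (\<Sum>i = 0..2 * k. (-1) ^ i * int ((a + i) choose (2 * i)) * int ((a + (2 * k - i)) choose (2 * (2 * k - i))))"
  by (simp add: morgan_voyce_product_series_def fps_even_part_def morgan_voyce_def fps_mult_nth mult.assoc)

lemma morgan_voyce_product_series_rec:
  "morgan_voyce_product_series (a + 4)
     = (4 - fps_X) * morgan_voyce_product_series (a + 3) - (6 + 2 * fps_X) * morgan_voyce_product_series (a + 2)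
       + (4 - fps_X) * morgan_voyce_product_series (a + 1) - morgan_voyce_product_series a"
proof -
  let ?G = "\<lambda>a. morgan_voyce (-1) a * morgan_voyce 1 a :: int fps"
  have mv_neg: "2 + fps_const (-1) * fps_X = (2 - fps_X :: int fps)"
    and mv_pos: "2 + fps_const 1 * fps_X = (2 + fps_X :: int fps)"
    by (simp_all flip: fps_const_neg)
  have pq: "(2 - fps_X) * (2 + fps_X) = fps_const 4 + fps_const (-1) * (fps_X\<^sup>2 :: int fps)"
    and p2q2: "(2 - fps_X)\<^sup>2 + (2 + fps_X)\<^sup>2 - 2 = fps_const 6 + fps_const 2 * (fps_X\<^sup>2 :: int fps)"
    by (simp_all add: algebra_simps power2_eq_square flip: fps_const_neg numeral_fps_const)
  have "?G (a + 4) = (fps_const 4 + fps_const (-1) * fps_X\<^sup>2) * ?G (a + 3)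
      - (fps_const 6 + fps_const 2 * fps_X\<^sup>2) * ?G (a + 2)
      + (fps_const 4 + fps_const (-1) * fps_X\<^sup>2) * ?G (a + 1) - ?G a"
    using product_of_second_order_recurrences[where u = "morgan_voyce (-1 :: int)" and v = "morgan_voyce (1 :: int)",
        OF morgan_voyce_rec morgan_voyce_rec, of a]
    by (simp only: mv_neg mv_pos pq p2q2)
  moreover have "fps_const 4 + fps_const (-1) * fps_X = (4 - fps_X :: int fps)"
    and "fps_const 6 + fps_const 2 * fps_X = (6 + 2 * fps_X :: int fps)"
    by (simp_all flip: fps_const_neg numeral_fps_const)
  ultimately show ?thesis
    unfolding morgan_voyce_product_series_def
    by (simp only: fps_even_part_add fps_even_part_diff fps_even_part_mult_X2_poly)
qed

(* (-X)^k (1 + X)^(2k) / (1 - X)^(4k+1); its coefficient of X^a is the right-hand side for a = m + k. *)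
definition binomial_column :: "nat \<Rightarrow> int fps" where
  "binomial_column k = (- (fps_X * (1 + fps_X) ^ 2)) ^ k * fps_neg_binomial (4 * k)"

lemma binomial_column_rec:
  "(1 - fps_X) ^ 4 * binomial_column (Suc k) = - (fps_X * (1 + fps_X) ^ 2 * binomial_column k)"
proof -
  have four: "4 * Suc k = 4 * k + 4" by simp
  have "(1 - fps_X) ^ 4 * binomial_column (Suc k)
      = - (fps_X * (1 + fps_X) ^ 2) * ((- (fps_X * (1 + fps_X) ^ 2)) ^ k
          * ((1 - fps_X) ^ 4 * fps_neg_binomial (4 * k + 4)))"
    unfolding binomial_column_def power_Suc four by (simp only: mult_ac)
  also have "\<dots> = - (fps_X * (1 + fps_X) ^ 2 * binomial_column k)"
    unfolding one_minus_X_power_mult_fps_neg_binomial binomial_column_def by (simp only: mult_minus_left mult.assoc)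
  finally show ?thesis .
qed

definition binomial_product_series :: "nat \<Rightarrow> int fps" where
  "binomial_product_series a = Abs_fps (\<lambda>k. binomial_column k $ a)"

lemma binomial_product_series_nth:
  "binomial_product_series a $ k
     = (if k \<le> a then (-1) ^ k * (\<Sum>i = 0..a - k. int ((4 * k + i) choose i) * int ((2 * k) choose (a - k - i)))
        else 0)"
proof -
  have "(- (fps_X * (1 + fps_X) ^ 2)) ^ k = fps_const ((-1) ^ k) * (fps_X ^ k * (1 + fps_X :: int fps) ^ (2 * k))"
    by (subst power_minus) (simp add: power_mult_distrib power_mult flip: fps_const_power fps_const_neg)
  then have "binomial_column k
      = fps_const ((-1) ^ k) * (fps_X ^ k * (fps_neg_binomial (4 * k) * (1 + fps_X) ^ (2 * k)))"
    unfolding binomial_column_def by (simp only: mult_ac)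
  moreover have "(fps_neg_binomial (4 * k) * (1 + fps_X) ^ (2 * k)) $ n
      = (\<Sum>i = 0..n. int ((4 * k + i) choose i) * int ((2 * k) choose (n - i)))" for n
    by (simp only: fps_mult_nth fps_neg_binomial_def fps_nth_Abs_fps one_plus_X_power_nth)
  ultimately show ?thesis
    by (simp add: binomial_product_series_def fps_X_power_mult_nth not_less)
qed

lemma binomial_product_series_rec:
  "binomial_product_series (a + 4)
     = (4 - fps_X) * binomial_product_series (a + 3) - (6 + 2 * fps_X) * binomial_product_series (a + 2)
       + (4 - fps_X) * binomial_product_series (a + 1) - binomial_product_series a"
proof (rule fps_ext)
  fix k
  show "binomial_product_series (a + 4) $ k = ((4 - fps_X) * binomial_product_series (a + 3)
      - (6 + 2 * fps_X) * binomial_product_series (a + 2)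
      + (4 - fps_X) * binomial_product_series (a + 1) - binomial_product_series a) $ k"
  proof (cases k)
    case 0
    then show ?thesis
      by (simp add: binomial_product_series_def binomial_column_def fps_neg_binomial_def numeral_fps_const)
  next
    case (Suc j)
    have "((1 - fps_X) ^ 4 * binomial_column (Suc j)) $ (a + 4)
        = - ((fps_X * (1 + fps_X) ^ 2 * binomial_column j) $ (a + 4))"
      by (simp only: binomial_column_rec fps_neg_nth)
    then have "binomial_column (Suc j) $ (a + 4) - 4 * binomial_column (Suc j) $ (a + 3)
        + 6 * binomial_column (Suc j) $ (a + 2) - 4 * binomial_column (Suc j) $ (a + 1) + binomial_column (Suc j) $ a
        = - (binomial_column j $ (a + 3) + 2 * binomial_column j $ (a + 2) + binomial_column j $ (a + 1))"
      by (simp only: one_minus_X_power4_mult_nth X_one_plus_X_power2_mult_nth)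
    then show ?thesis
      using Suc by (simp add: binomial_product_series_def numeral_fps_const algebra_simps)
  qed
qed

lemma morgan_voyce_product_series_eq_binomial_initial:
  assumes "a < 4"
  shows "morgan_voyce_product_series a = binomial_product_series a"
proof (rule fps_ext)
  fix k
  show "morgan_voyce_product_series a $ k = binomial_product_series a $ k"
  proof (cases "k \<le> a")
    case True
    with assms have "(a, k) \<in> {(0, 0), (1, 0), (1, 1), (2, 0), (2, 1), (2, 2), (3, 0), (3, 1), (3, 2), (3, 3)}"
      by (auto simp: numeral_eq_Suc less_Suc_eq le_Suc_eq)
    then show ?thesis
      by (elim insertE emptyE) (simp_all add: morgan_voyce_product_series_nth binomial_product_series_nth numeral_eq_Suc)
  next
    case False
    have "morgan_voyce_product_series a $ k = 0"
      unfolding morgan_voyce_product_series_nth using False by (intro sum.neutral) auto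
    with False show ?thesis by (simp add: binomial_product_series_nth)
  qed
qed

lemma morgan_voyce_product_series_eq_binomial: "morgan_voyce_product_series a = binomial_product_series a"
  by (rule fourth_order_recurrence_unique[OF morgan_voyce_product_series_rec binomial_product_series_rec
        morgan_voyce_product_series_eq_binomial_initial])

lemma ibinom_of_nat: "ibinom (int n) (int j) = int (n choose j)"
  by (simp add: ibinom_def)

lemma ibinom_add_diff: "ibinom (int a + int i) (int a - int i) = int ((a + i) choose (2 * i))"
proof (cases "i \<le> a")
  case True
  have "a + i - (a - i) = 2 * i" using True by simp
  then have "(a + i) choose (a - i) = (a + i) choose (2 * i)"
    using binomial_symmetric[of "a - i" "a + i"] by simp
  moreover have "nat (int a + int i) = a + i" "nat (int a - int i) = a - i"
    using True by simp_all
  ultimately show ?thesis using True by (simp add: ibinom_def)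
qed (simp add: ibinom_def)

lemma sum_int_atLeastAtMost: "(\<Sum>i = 0..int n. f i) = (\<Sum>i = 0..n. f (int i))"
proof -
  have "{0..int n} = int ` {0..n}" by (simp add: image_int_atLeastAtMost)
  then show ?thesis by (simp add: sum.reindex)
qed

lemma morgan_voyce_product_series_nth_ibinom:
  "morgan_voyce_product_series (m + k) $ k
     = (\<Sum>i = 0..2 * int k. (-1) ^ nat i * ibinom (int m + int k + i) (int m + int k - i)
          * ibinom (int m + 3 * int k - i) (int m - int k + i))"
proof -
  have summand: "(-1) ^ i * int ((m + k + i) choose (2 * i)) * int ((m + k + (2 * k - i)) choose (2 * (2 * k - i)))
      = (-1) ^ nat (int i) * ibinom (int m + int k + int i) (int m + int k - int i)
          * ibinom (int m + 3 * int k - int i) (int m - int k + int i)"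
    if "i \<in> {0..2 * k}" for i
  proof -
    have "int m + int k = int (m + k)"
      and "int m + 3 * int k - int i = int (m + k) + int (2 * k - i)"
      and "int m - int k + int i = int (m + k) - int (2 * k - i)"
      using that by simp_all
    then show ?thesis by (simp only: ibinom_add_diff nat_int)
  qed
  have "(\<Sum>i = 0..2 * int k. F i) = (\<Sum>i = 0..2 * k. F (int i))" for F :: "int \<Rightarrow> int"
    using sum_int_atLeastAtMost[of F "2 * k"] by simp
  then show ?thesis
    unfolding morgan_voyce_product_series_nth by (simp only: sum.cong[OF refl summand])
qed

lemma binomial_product_series_nth_ibinom:
  "binomial_product_series (m + k) $ k
     = (-1) ^ k * (\<Sum>i = 0..int m. ibinom (2 * int k) (int m - i) * ibinom (4 * int k + i) i)"
proof -
  have summand: "int ((4 * k + i) choose i) * int ((2 * k) choose (m - i))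
      = ibinom (2 * int k) (int m - int i) * ibinom (4 * int k + int i) (int i)"
    if "i \<in> {0..m}" for i
  proof -
    have "2 * int k = int (2 * k)" "int m - int i = int (m - i)" "4 * int k + int i = int (4 * k + i)"
      using that by simp_all
    then show ?thesis by (simp only: ibinom_of_nat mult.commute)
  qed
  have "binomial_product_series (m + k) $ k
      = (-1) ^ k * (\<Sum>i = 0..m. int ((4 * k + i) choose i) * int ((2 * k) choose (m - i)))"
    by (simp add: binomial_product_series_nth)
  then show ?thesis
    unfolding sum_int_atLeastAtMost by (simp only: sum.cong[OF refl summand])
qed

theorem mainTheorem11:
  fixes m k :: int
  assumes "m \<ge> 0" and "k \<ge> 0"
  shows "(\<Sum>i = 0..2*k. (-1) ^ nat i * ibinom (m+k+i) (m+k-i) * ibinom (m+3*k-i) (m-k+i))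
       = (-1) ^ nat k * (\<Sum>i = 0..m. ibinom (2*k) (m-i) * ibinom (4*k+i) i)"
proof -
  obtain m' k' where "m = int m'" "k = int k'"
    using assms nonneg_int_cases by metis
  then show ?thesis
    using morgan_voyce_product_series_nth_ibinom[of m' k'] binomial_product_series_nth_ibinom[of m' k']
      morgan_voyce_product_series_eq_binomial[of "m' + k'"]
    by simp
qed

end
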